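(* Let $n,k$ be integers with $1\le k\le n<2k$ and set $\delta_k=\frac{1}{3k}$. There is a constant $M_0$ depending only on $n,k$ such that for every $\kappa=(\kappa_1,\dots,\kappa_n)\in\Gamma_k$ whose maximum entry $\kappa_1$ satisfies $\kappa_1\ge M_0$, and all indices $i\ne l$, $$(2-\delta_k)e^{\kappa_l}\sigma_{k-2}(\kappa|il)+(2-\delta_k)\frac{e^{\kappa_l}-e^{\kappa_i}}{\kappa_l-\kappa_i}\sigma_{k-1}(\kappa|l)\ge\frac{e^{\kappa_l}}{\kappa_1}\sigma_{k-1}(\kappa|i).$$
   Context: $\sigma_m$ is the $m$-th elementary symmetric function ($\sigma_0=1$, $\sigma_m=0$ for $m<0$); $\Gamma_k=\{\kappa\in\mathbb{R}^n:\sigma_m(\kappa)>0,\ m=1,\dots,k\}$; $(\kappa|ab)$ denotes $\kappa$ with the entries of indices $a,b$ deleted and $\sigma_m(\kappa|ab)=\sigma_m((\kappa|ab))$. When $\kappa_l=\kappa_i$, the difference quotient $\frac{e^{\kappa_l}-e^{\kappa_i}}{\kappa_l-\kappa_i}$ is interpreted as its limit $e^{\kappa_i}$. *)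

theory Defs
  imports Complex_Main
begin

definition esym :: "int \<Rightarrow> (nat \<Rightarrow> real) \<Rightarrow> nat set \<Rightarrow> real" where
  "esym m \<kappa> I = (if m < 0 then 0
     else (\<Sum>S\<in>{S. S \<subseteq> I \<and> card S = nat m}. \<Prod>j\<in>S. \<kappa> j))"

definition Gamma :: "nat \<Rightarrow> nat \<Rightarrow> (nat \<Rightarrow> real) \<Rightarrow> bool" where
  "Gamma n k \<kappa> \<longleftrightarrow> (\<forall>m\<in>{1..k}. esym (int m) \<kappa> {1..n} > 0)"

definition expdq :: "real \<Rightarrow> real \<Rightarrow> real" where
  "expdq a b = (if a = b then exp b else (exp a - exp b) / (a - b))"

end

theory Submission
  imports Defs "HOL-Computational_Algebra.Polynomial"
begin

(* Write sigma_{k-1}(kappa|i) = sigma_{k-1}(kappa|l) + (kappa_l - kappa_i) sigma_{k-2}(kappa|il)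
   and bound exp a <= q (1 + max 0 (a - b)) for the difference quotient q of exp at a, b.
   The inequality then follows from sigma_{k-1}(kappa|l) > 0, sigma_{k-2}(kappa|il) > 0 and
   1 + max 0 (kappa_l - kappa_i) <= (2 - delta_k) kappa_1.
   Positivity holds because (kappa|i) lies in Gamma_{k-1} whenever kappa lies in Gamma_k,
   a consequence of Newton's inequality sigma_m sigma_{m+2} <= sigma_{m+1}^2. For the gap,
   a negative entry satisfies -kappa_i < (n - k)/k kappa_1: expand sigma_k(kappa) > 0 along
   kappa_i and bound sigma_k(kappa|i) / sigma_{k-1}(kappa|i) by the Newton-Maclaurin inequality;
   n < 2k and kappa_1 >= 2k finish the estimate.
   Newton's inequalities are proved for the normalised means: by Rolle's theorem,
   differentiating prod_j (x + y_j) preserves them, which reduces to lists of length m + 2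
   and, after inverting the entries, to the AM-GM inequality for two numbers; repeated
   entries are removed by a perturbation. *)

section \<open>Elementary symmetric functions of a list\<close>

fun list_esym :: "nat \<Rightarrow> real list \<Rightarrow> real" where
  "list_esym 0 ys = 1"
| "list_esym (Suc m) [] = 0"
| "list_esym (Suc m) (y # ys) = list_esym (Suc m) ys + y * list_esym m ys"

lemma list_esym_eq_0: "length ys < m \<Longrightarrow> list_esym m ys = 0"
  by (induction m ys rule: list_esym.induct) auto

lemma list_esym_length: "list_esym (length ys) ys = prod_list ys"
  by (induction ys) (auto simp: list_esym_eq_0)

lemma list_esym_map_inverse:
  assumes "0 \<notin> set ys" and "j \<le> length ys"
  shows "list_esym j (map inverse ys) * prod_list ys = list_esym (length ys - j) ys"
  using assms
proof (induction ys arbitrary: j)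
  case Nil
  then show ?case by simp
next
  case (Cons y ys)
  show ?case
  proof (cases j)
    case 0
    then show ?thesis by (simp add: list_esym_length list_esym_eq_0)
  next
    case (Suc j')
    then have "list_esym j (map inverse (y # ys)) * prod_list (y # ys)
        = y * (list_esym (Suc j') (map inverse ys) * prod_list ys)
          + list_esym j' (map inverse ys) * prod_list ys"
      using Cons.prems by (simp add: algebra_simps)
    also have "\<dots> = list_esym (length (y # ys) - j) (y # ys)"
    proof (cases "j' < length ys")
      case True
      then have "length ys - j' = Suc (length ys - Suc j')"
        by simp
      then show ?thesis
        using Cons Suc True by simp
    next
      case False
      then show ?thesis
        using Cons Suc by (simp add: list_esym_eq_0)
    qed
    finally show ?thesis .
  qed
qed

definition linear_factors :: "real list \<Rightarrow> real poly" where
  "linear_factors ys = (\<Prod>y\<leftarrow>ys. [:y, 1:])"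

lemma linear_factors_Cons: "linear_factors (y # ys) = [:y, 1:] * linear_factors ys"
  by (simp add: linear_factors_def)

lemma poly_linear_factors_eq_0_iff: "poly (linear_factors ys) x = 0 \<longleftrightarrow> - x \<in> set ys"
proof -
  have "poly (linear_factors ys) x = (\<Prod>y\<leftarrow>ys. x + y)"
    by (induction ys) (simp_all add: linear_factors_def algebra_simps)
  then show ?thesis
    by (auto simp: prod_list_zero_iff add_eq_0_iff)
qed

lemma linear_factors_nonzero: "linear_factors ys \<noteq> 0"
  by (auto simp: linear_factors_def prod_list_zero_iff)

lemma degree_linear_factors: "degree (linear_factors ys) = length ys"
proof (induction ys)
  case (Cons y ys)
  then show ?case
    using linear_factors_nonzero[of ys]
    by (simp add: linear_factors_Cons degree_mult_eq del: mult_pCons_left)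
qed (simp add: linear_factors_def)

lemma coeff_linear_factors:
  "i \<le> length ys \<Longrightarrow> coeff (linear_factors ys) i = list_esym (length ys - i) ys"
proof (induction ys arbitrary: i)
  case (Cons y ys)
  consider "i = 0" | i' where "i = Suc i'" "i' < length ys" | "i = Suc (length ys)"
    using Cons.prems by (cases i) (auto simp: le_less)
  then show ?case
  proof cases
    case 1
    then show ?thesis
      using Cons.IH[of 0] by (simp add: linear_factors_Cons list_esym_eq_0)
  next
    case 2
    then have "length (y # ys) - i = Suc (length ys - Suc i')"
      by simp
    then show ?thesis
      using Cons.IH[of i'] Cons.IH[of i] 2 by (simp add: linear_factors_Cons)
  next
    case 3
    then show ?thesis
      using Cons.IH[of "length ys"]
      by (simp add: linear_factors_Cons coeff_eq_0 degree_linear_factors)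
  qed
qed (simp add: linear_factors_def)

lemma pderiv_roots_interlace:
  fixes p :: "real poly"
  assumes "sorted_wrt (<) (a # as)" and "\<forall>x\<in>set (a # as). poly p x = 0"
  shows "\<exists>rs. length rs = length as \<and> sorted_wrt (<) rs \<and>
           (\<forall>r\<in>set rs. a < r \<and> poly (pderiv p) r = 0)"
  using assms
proof (induction as arbitrary: a)
  case (Cons b bs)
  have "sorted_wrt (<) (b # bs)" "\<forall>x\<in>set (b # bs). poly p x = 0"
    using Cons.prems by auto
  then obtain rs where rs: "length rs = length bs" "sorted_wrt (<) rs"
      "\<forall>r\<in>set rs. b < r \<and> poly (pderiv p) r = 0"
    using Cons.IH by blast
  have "a < b"
    using Cons.prems(1) by simp
  with poly_MVT[of a b p] obtain r where "a < r" "r < b" "poly (pderiv p) r = 0"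
    using Cons.prems(2) by auto
  with rs \<open>a < b\<close> show ?case
    by (intro exI[of _ "r # rs"]) auto
qed simp

lemma pderiv_linear_factors:
  assumes "distinct ys" and "length ys = Suc N"
  shows "\<exists>zs. distinct zs \<and> length zs = N \<and>
           pderiv (linear_factors ys) = smult (real (Suc N)) (linear_factors zs)"
proof -
  define P where "P = linear_factors ys"
  obtain a as where as: "sorted_list_of_set (uminus ` set ys) = a # as"
    using assms(2) by (cases "sorted_list_of_set (uminus ` set ys)") auto
  have "length (a # as) = Suc N"
    using arg_cong[OF as, of length] assms
    by (simp add: card_image distinct_card)
  moreover have "sorted_wrt (<) (a # as)" and "set (a # as) = uminus ` set ys"
    by (metis as sorted_list_of_set.strict_sorted_key_list_of_set)
       (metis as finite_imageI finite_set sorted_list_of_set.set_sorted_key_list_of_set)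
  ultimately obtain rs where rs: "length rs = N" "sorted_wrt (<) rs"
      "\<forall>r\<in>set rs. poly (pderiv P) r = 0"
    using pderiv_roots_interlace[of a as P]
    by (force simp: P_def poly_linear_factors_eq_0_iff)
  define zs where "zs = map uminus rs"
  have "distinct zs" "length zs = N"
    using rs by (auto simp: zs_def distinct_map strict_sorted_iff)
  moreover have "pderiv P = smult (real (Suc N)) (linear_factors zs)"
  proof (rule poly_eqI_degree_lead_coeff[where n = N and A = "set rs"])
    show "coeff (pderiv P) N = coeff (smult (real (Suc N)) (linear_factors zs)) N"
      using coeff_linear_factors[of "Suc N" ys] coeff_linear_factors[of N zs] assms \<open>length zs = N\<close>
      by (simp add: coeff_pderiv P_def)
    show "N \<le> card (set rs)"
      using rs by (simp add: distinct_card strict_sorted_iff)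
    show "degree (pderiv P) \<le> N"
      by (simp add: degree_pderiv P_def degree_linear_factors assms)
    show "degree (smult (real (Suc N)) (linear_factors zs)) \<le> N"
      by (simp add: degree_linear_factors \<open>length zs = N\<close>)
  next
    fix z assume "z \<in> set rs"
    then show "poly (pderiv P) z = poly (smult (real (Suc N)) (linear_factors zs)) z"
      using rs by (simp add: zs_def poly_linear_factors_eq_0_iff)
  qed
  ultimately show ?thesis
    unfolding P_def by blast
qed

section \<open>Newton's inequalities\<close>

definition sym_mean :: "nat \<Rightarrow> real list \<Rightarrow> real" where
  "sym_mean m ys = list_esym m ys / real (length ys choose m)"

lemma sym_mean_pderiv:
  assumes "distinct ys" and "length ys = Suc N"
  shows "\<exists>zs. distinct zs \<and> length zs = N \<and> (\<forall>j\<le>N. sym_mean j zs = sym_mean j ys)"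
proof -
  obtain zs where zs: "distinct zs" "length zs = N"
    and P': "pderiv (linear_factors ys) = smult (real (Suc N)) (linear_factors zs)"
    using pderiv_linear_factors[OF assms] by blast
  have "sym_mean j zs = sym_mean j ys" if "j \<le> N" for j
  proof -
    have "real (Suc N) * list_esym j zs = real (Suc N - j) * list_esym j ys"
      using arg_cong[OF P', of "\<lambda>p. coeff p (N - j)"] that assms(2) zs(2)
        coeff_linear_factors[of "Suc (N - j)" ys] coeff_linear_factors[of "N - j" zs]
      by (simp add: coeff_pderiv Suc_diff_le)
    then have "list_esym j zs = real (Suc N - j) * list_esym j ys / real (Suc N)"
      by (simp add: field_simps)
    moreover have "real (N choose j) = real (Suc N - j) * real (Suc N choose j) / real (Suc N)"
      using binomial_absorb_comp[of "Suc N" j] by (simp add: field_simps flip: of_nat_mult)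
    moreover have "real (Suc N - j) > 0"
      using that by simp
    ultimately show ?thesis
      using assms(2) zs(2) by (simp add: sym_mean_def)
  qed
  with zs show ?thesis
    by blast
qed

lemma sym_mean_reduce:
  assumes "distinct ys" and "p \<le> length ys"
  shows "\<exists>ws. distinct ws \<and> length ws = p \<and> (\<forall>j\<le>p. sym_mean j ws = sym_mean j ys)"
  using assms
proof (induction "length ys - p" arbitrary: ys)
  case (Suc d)
  then obtain N where N: "length ys = Suc N"
    by (cases ys) auto
  obtain zs where zs: "distinct zs" "length zs = N" "\<forall>j\<le>N. sym_mean j zs = sym_mean j ys"
    using sym_mean_pderiv[OF Suc.prems(1) N] by blast
  moreover have "d = length zs - p" "p \<le> length zs"
    using Suc.hyps(2) Suc.prems(2) N zs(2) by auto
  ultimately show ?case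
    using Suc.hyps(1)[of zs] by fastforce
qed auto

lemma sym_mean_2_le:
  assumes "distinct ys"
  shows "sym_mean 2 ys \<le> (sym_mean 1 ys)\<^sup>2"
proof (cases "2 \<le> length ys")
  case True
  then obtain ws where ws: "length ws = 2"
      "sym_mean 2 ws = sym_mean 2 ys" "sym_mean 1 ws = sym_mean 1 ys"
    using sym_mean_reduce[OF assms, of 2] by auto
  then obtain a b where ab: "ws = [a, b]"
    by (metis One_nat_def Suc_1 length_0_conv length_Suc_conv)
  then have "sym_mean 2 ws = a * b" "sym_mean 1 ws = (a + b) / 2"
    by (simp_all add: sym_mean_def numeral_2_eq_2)
  moreover have "a * b \<le> ((a + b) / 2)\<^sup>2"
    using sum_squares_ge_zero[of "a - b" 0] by (simp add: power2_eq_square field_simps)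
  ultimately show ?thesis
    using ws by metis
qed (simp add: sym_mean_def list_esym_eq_0)

lemma sym_mean_newton_distinct:
  assumes "distinct ys"
  shows "sym_mean m ys * sym_mean (m + 2) ys \<le> (sym_mean (m + 1) ys)\<^sup>2"
proof (cases "m + 2 \<le> length ys")
  case True
  then obtain ws where ws: "distinct ws" "length ws = m + 2"
    and same: "\<forall>j\<le>m + 2. sym_mean j ws = sym_mean j ys"
    using sym_mean_reduce[OF assms] by blast
  define P where "P = prod_list ws"
  have top: "list_esym (m + 2) ws = P"
    using list_esym_length[of ws] ws(2) by (simp add: P_def)
  have "sym_mean m ws * sym_mean (m + 2) ws \<le> (sym_mean (m + 1) ws)\<^sup>2"
  proof (cases "0 \<in> set ws")
    case True
    then have "sym_mean (m + 2) ws = 0"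
      using top ws(2) by (simp add: sym_mean_def P_def prod_list_zero_iff)
    then show ?thesis
      by simp
  next
    case False
    txt \<open>Inverting the entries turns the means of orders m, m + 1, m + 2
      into those of orders 2, 1, 0.\<close>
    define vs where "vs = map inverse ws"
    have "distinct vs" "length vs = m + 2"
      using ws by (simp_all add: vs_def distinct_map inj_on_def)
    have e1: "list_esym 1 vs * P = list_esym (m + 1) ws"
      and e2: "list_esym 2 vs * P = list_esym m ws"
      using list_esym_map_inverse[OF False, of 1] list_esym_map_inverse[OF False, of 2] ws(2)
      by (simp_all add: vs_def P_def)
    have "m + 2 choose m = m + 2 choose 2"
      using binomial_symmetric[of m "m + 2"] by simp
    then have "sym_mean m ws * sym_mean (m + 2) ws = P\<^sup>2 * sym_mean 2 vs"
      using top e2 \<open>length vs = m + 2\<close> ws(2)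
      by (simp add: sym_mean_def power2_eq_square mult.commute)
    also have "\<dots> \<le> P\<^sup>2 * (sym_mean 1 vs)\<^sup>2"
      using sym_mean_2_le[OF \<open>distinct vs\<close>] by (simp add: mult_left_mono)
    also have "\<dots> = (sym_mean (m + 1) ws)\<^sup>2"
      using e1 \<open>length vs = m + 2\<close> ws(2)
      by (simp add: sym_mean_def power_divide mult.commute flip: power_mult_distrib)
    finally show ?thesis .
  qed
  then show ?thesis
    using same by simp
qed (simp add: sym_mean_def list_esym_eq_0)

fun spread :: "real \<Rightarrow> real list \<Rightarrow> real list" where
  "spread t [] = []"
| "spread t (y # ys) = (y + t * real (length ys)) # spread t ys"

lemma length_spread [simp]: "length (spread t ys) = length ys"
  by (induction ys) auto

lemma list_esym_spread_tendsto: "((\<lambda>t. list_esym m (spread t ys)) \<longlongrightarrow> list_esym m ys) (at_right 0)"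
proof (induction ys arbitrary: m)
  case (Cons y ys)
  show ?case
  proof (cases m)
    case (Suc m')
    have "((\<lambda>t. list_esym (Suc m') (spread t ys)
              + (y + t * real (length ys)) * list_esym m' (spread t ys))
           \<longlongrightarrow> list_esym (Suc m') ys + (y + 0 * real (length ys)) * list_esym m' ys) (at_right 0)"
      by (intro tendsto_intros Cons.IH)
    then show ?thesis
      using Suc by simp
  qed simp
qed (cases m; simp)

lemma set_spread: "x \<in> set (spread t ys) \<Longrightarrow> \<exists>y\<in>set ys. \<exists>c<length ys. x = y + t * real c"
proof (induction ys)
  case (Cons y ys)
  then show ?case
    by (cases "x = y + t * real (length ys)") (auto, metis less_SucI)
qed simp

lemma eventually_distinct_spread: "\<forall>\<^sub>F t in at_right 0. distinct (spread t ys)"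
proof (induction ys)
  case (Cons y ys)
  define N where "N = length ys"
  have "\<forall>\<^sub>F t in at_right 0. \<forall>p\<in>set ys \<times> {..<N}. t \<noteq> (fst p - y) / (real N - real (snd p))"
    by (intro eventually_ball_finite eventually_neq_at_within ballI) simp
  then have "\<forall>\<^sub>F t in at_right 0. y + t * real N \<notin> set (spread t ys)"
  proof eventually_elim
    case (elim t)
    show ?case
    proof
      assume "y + t * real N \<in> set (spread t ys)"
      then obtain y' c where "y' \<in> set ys" "c < N" "y + t * real N = y' + t * real c"
        unfolding N_def by (blast dest: set_spread)
      then have "t = (y' - y) / (real N - real c)"
        by (simp add: field_simps)
      with elim \<open>y' \<in> set ys\<close> \<open>c < N\<close> show False
        by auto
    qed
  qed
  with Cons.IH show ?case
    by eventually_elim (simp add: N_def)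
qed simp

lemma sym_mean_newton: "sym_mean m ys * sym_mean (m + 2) ys \<le> (sym_mean (m + 1) ys)\<^sup>2"
proof -
  have lim: "((\<lambda>t. sym_mean j (spread t ys)) \<longlongrightarrow> sym_mean j ys) (at_right 0)" for j
    unfolding sym_mean_def length_spread divide_inverse
    by (intro tendsto_intros list_esym_spread_tendsto)
  have "\<forall>\<^sub>F t in at_right 0.
      sym_mean m (spread t ys) * sym_mean (m + 2) (spread t ys)
        \<le> (sym_mean (m + 1) (spread t ys))\<^sup>2"
    using eventually_distinct_spread[of ys] by eventually_elim (rule sym_mean_newton_distinct)
  from tendsto_le[OF _ tendsto_power[OF lim] tendsto_mult[OF lim lim] this] show ?thesis
    by simp
qed

lemma Suc_times_binomial_Suc: "Suc k * (n choose Suc k) = (n - k) * (n choose k)"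
  using binomial_absorption[of k n] binomial_absorb_comp[of n k] by simp

lemma binomial_log_concave: "(n choose m) * (n choose (m + 2)) \<le> (n choose (m + 1))\<^sup>2"
proof (cases "m < n")
  case True
  define a b c where "a = n choose m" and "b = n choose (m + 1)" and "c = n choose (m + 2)"
  have "(a * c) * ((m + 2) * (n - m)) = ((n - m) * a) * ((m + 2) * c)"
    by (simp add: algebra_simps)
  also have "\<dots> = ((m + 1) * b) * ((n - (m + 1)) * b)"
    using Suc_times_binomial_Suc[of m n] Suc_times_binomial_Suc[of "m + 1" n]
    by (simp add: a_def b_def c_def)
  also have "\<dots> \<le> (b * b) * ((m + 2) * (n - m))"
    by (simp add: algebra_simps mult_mono diff_le_mono)
  finally show ?thesis
    using True by (simp add: a_def b_def c_def power2_eq_square)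
qed (simp add: binomial_eq_0)

lemma list_esym_newton: "list_esym m ys * list_esym (m + 2) ys \<le> (list_esym (m + 1) ys)\<^sup>2"
proof (cases "m + 2 \<le> length ys")
  case True
  define A B C where "A = real (length ys choose m)" and "B = real (length ys choose (m + 1))"
    and "C = real (length ys choose (m + 2))"
  have pos: "A > 0" "B > 0" "C > 0"
    using True by (simp_all add: A_def B_def C_def)
  have "A * C \<le> B\<^sup>2"
    unfolding A_def B_def C_def of_nat_mult[symmetric] of_nat_power[symmetric] of_nat_le_iff
    by (rule binomial_log_concave)
  have "list_esym m ys * list_esym (m + 2) ys = sym_mean m ys * sym_mean (m + 2) ys * (A * C)"
    using pos by (simp add: sym_mean_def A_def C_def)
  also have "\<dots> \<le> (sym_mean (m + 1) ys)\<^sup>2 * (A * C)"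
    using sym_mean_newton pos by (simp add: mult_right_mono)
  also have "\<dots> \<le> (sym_mean (m + 1) ys)\<^sup>2 * B\<^sup>2"
    using \<open>A * C \<le> B\<^sup>2\<close> by (simp add: mult_left_mono)
  also have "\<dots> = (list_esym (m + 1) ys)\<^sup>2"
    using pos by (simp add: sym_mean_def B_def power_divide)
  finally show ?thesis .
qed (simp add: list_esym_eq_0)

lemma sym_mean_Suc_le:
  "(\<forall>i\<le>j. 0 < sym_mean i ys) \<Longrightarrow> sym_mean (Suc j) ys \<le> sym_mean 1 ys * sym_mean j ys"
proof (induction j)
  case 0
  then show ?case
    by (simp add: sym_mean_def)
next
  case (Suc j)
  then have pos: "0 < sym_mean j ys" "0 < sym_mean (Suc j) ys"
    by auto
  have "sym_mean j ys * sym_mean (Suc (Suc j)) ys \<le> sym_mean (Suc j) ys * sym_mean (Suc j) ys"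
    using sym_mean_newton[of j ys] by (simp add: power2_eq_square)
  also have "\<dots> \<le> sym_mean (Suc j) ys * (sym_mean 1 ys * sym_mean j ys)"
    using Suc pos by (simp add: mult_left_mono)
  finally show ?case
    using pos(1) by (simp add: mult.left_commute)
qed

lemma list_esym_Suc_le:
  assumes "\<forall>i\<le>j. 0 < list_esym i ys"
  shows "real (Suc j) * real (length ys) * list_esym (Suc j) ys
    \<le> real (length ys - j) * list_esym 1 ys * list_esym j ys"
proof (cases "j < length ys")
  case True
  define N where "N = length ys"
  have binom: "real (Suc j) * real (N choose Suc j) = real (N - j) * real (N choose j)"
    using Suc_times_binomial_Suc[of j N] by (metis of_nat_mult)
  have pos: "real (N choose Suc j) > 0" "real (N choose j) > 0" "real N > 0"
    using True by (simp_all add: N_def del: length_greater_0_conv)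
  have "0 < sym_mean i ys" if "i \<le> j" for i
    using assms that True by (simp add: sym_mean_def)
  then have "list_esym (Suc j) ys / real (N choose Suc j)
      \<le> list_esym 1 ys / real N * (list_esym j ys / real (N choose j))"
    using sym_mean_Suc_le[of j ys] by (simp add: sym_mean_def N_def)
  then have "real (Suc j) * real N * list_esym (Suc j) ys
      \<le> real N * (real (Suc j) * real (N choose Suc j))
        * (list_esym 1 ys / real N * (list_esym j ys / real (N choose j)))"
    using pos by (simp add: field_simps del: of_nat_Suc)
  also have "\<dots> = real (N - j) * list_esym 1 ys * list_esym j ys"
    using pos unfolding binom by (simp add: field_simps)
  finally show ?thesis
    by (simp add: N_def)
next
  case False
  then show ?thesis
    using assms by (auto simp: list_esym_eq_0 le_less)
qed

section \<open>Elementary symmetric functions of an indexed family\<close>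

lemma esym_neg: "m < 0 \<Longrightarrow> esym m \<kappa> I = 0"
  by (simp add: esym_def)

lemma esym_0: "finite I \<Longrightarrow> esym 0 \<kappa> I = 1"
proof -
  assume "finite I"
  then have "{S. S \<subseteq> I \<and> card S = 0} = {{}}"
    using finite_subset by fastforce
  then show ?thesis
    by (simp add: esym_def)
qed

lemma esym_eq_0: "finite I \<Longrightarrow> int (card I) < m \<Longrightarrow> esym m \<kappa> I = 0"
proof -
  assume "finite I" "int (card I) < m"
  then have "card S \<noteq> nat m" if "S \<subseteq> I" for S
    using card_mono[OF \<open>finite I\<close> that] by linarith
  then have no_subsets: "{S. S \<subseteq> I \<and> card S = nat m} = {}"
    by blast
  show ?thesis
    unfolding esym_def no_subsets by simp
qed

lemma subsets_card_Suc_insert: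
  assumes "a \<notin> I" and "finite I"
  shows "{S. S \<subseteq> insert a I \<and> card S = Suc m}
    = {S. S \<subseteq> I \<and> card S = Suc m} \<union> insert a ` {S. S \<subseteq> I \<and> card S = m}"
proof (intro equalityI subsetI)
  fix S assume S: "S \<in> {S. S \<subseteq> insert a I \<and> card S = Suc m}"
  show "S \<in> {S. S \<subseteq> I \<and> card S = Suc m} \<union> insert a ` {S. S \<subseteq> I \<and> card S = m}"
  proof (cases "a \<in> S")
    case True
    then have "S = insert a (S - {a})" "S - {a} \<subseteq> I" "card (S - {a}) = m"
      using S by auto
    then show ?thesis
      by blast
  qed (use S in auto)
next
  fix S assume "S \<in> {S. S \<subseteq> I \<and> card S = Suc m} \<union> insert a ` {S. S \<subseteq> I \<and> card S = m}"
  moreover have "card (insert a T) = Suc (card T)" if "T \<subseteq> I" for T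
    using that assms by (meson card_insert_disjoint finite_subset subsetD)
  ultimately show "S \<in> {S. S \<subseteq> insert a I \<and> card S = Suc m}"
    by auto
qed

lemma esym_insert:
  assumes "finite I" and "a \<notin> I"
  shows "esym m \<kappa> (insert a I) = esym m \<kappa> I + \<kappa> a * esym (m - 1) \<kappa> I"
proof (cases "m \<le> 0")
  case True
  then show ?thesis
    using assms(1) by (cases "m = 0") (simp_all add: esym_0 esym_neg)
next
  case False
  then obtain m' where m: "nat m = Suc m'" "nat (m - 1) = m'" "\<not> m < 0" "\<not> m - 1 < 0"
    by (cases "nat m") auto
  let ?sets = "\<lambda>j. {S. S \<subseteq> I \<and> card S = j}"
  have inj: "inj_on (insert a) (?sets m')"
  proof (rule inj_onI)
    fix S T assume "S \<in> ?sets m'" "T \<in> ?sets m'" "insert a S = insert a T"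
    moreover have "a \<notin> S" "a \<notin> T"
      using calculation(1,2) assms(2) by auto
    ultimately show "S = T"
      by (metis Diff_insert_absorb)
  qed
  have "esym m \<kappa> (insert a I) = (\<Sum>S\<in>?sets (Suc m') \<union> insert a ` ?sets m'. \<Prod>j\<in>S. \<kappa> j)"
    using m assms by (simp add: esym_def subsets_card_Suc_insert)
  also have "\<dots> = (\<Sum>S\<in>?sets (Suc m'). \<Prod>j\<in>S. \<kappa> j) + (\<Sum>S\<in>insert a ` ?sets m'. \<Prod>j\<in>S. \<kappa> j)"
    using assms by (intro sum.union_disjoint) auto
  also have "(\<Sum>S\<in>insert a ` ?sets m'. \<Prod>j\<in>S. \<kappa> j) = (\<Sum>S\<in>?sets m'. \<Prod>j\<in>insert a S. \<kappa> j)"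
    using inj by (simp add: sum.reindex)
  also have "\<dots> = (\<Sum>S\<in>?sets m'. \<kappa> a * (\<Prod>j\<in>S. \<kappa> j))"
    using assms by (intro sum.cong refl prod.insert) (auto dest: finite_subset)
  finally show ?thesis
    using m by (simp add: esym_def sum_distrib_left)
qed

lemma esym_insert_Suc:
  "finite I \<Longrightarrow> a \<notin> I \<Longrightarrow>
    esym (int (Suc m)) \<kappa> (insert a I) = esym (int (Suc m)) \<kappa> I + \<kappa> a * esym (int m) \<kappa> I"
  using esym_insert[of I a "int (Suc m)" \<kappa>] by simp

lemma esym_set_eq_list_esym:
  "distinct xs \<Longrightarrow> esym (int m) \<kappa> (set xs) = list_esym m (map \<kappa> xs)"
proof (induction xs arbitrary: m)
  case Nil
  then show ?case
    by (cases m) (simp_all add: esym_0 esym_eq_0)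
next
  case (Cons x xs)
  show ?case
  proof (cases m)
    case (Suc m')
    have shift: "int (Suc m') - 1 = int m'"
      by simp
    show ?thesis
      using Cons Suc by (simp add: esym_insert shift del: of_nat_Suc)
  qed (simp add: esym_0)
qed

lemma esym_eq_list_esym:
  "finite I \<Longrightarrow> esym (int m) \<kappa> I = list_esym m (map \<kappa> (sorted_list_of_set I))"
  using esym_set_eq_list_esym[of "sorted_list_of_set I" m \<kappa>] by simp

lemma esym_newton:
  "finite I \<Longrightarrow> esym (int m) \<kappa> I * esym (int (m + 2)) \<kappa> I \<le> (esym (int (m + 1)) \<kappa> I)\<^sup>2"
  by (simp only: esym_eq_list_esym list_esym_newton)

lemma esym_Suc_le:
  assumes "finite I" and "\<forall>i\<le>j. 0 < esym (int i) \<kappa> I"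
  shows "real (Suc j) * real (card I) * esym (int (Suc j)) \<kappa> I
    \<le> real (card I - j) * esym 1 \<kappa> I * esym (int j) \<kappa> I"
proof -
  have "esym 1 \<kappa> I = list_esym 1 (map \<kappa> (sorted_list_of_set I))"
    using esym_eq_list_esym[OF assms(1), of 1 \<kappa>] by simp
  then show ?thesis
    using list_esym_Suc_le[of j "map \<kappa> (sorted_list_of_set I)"] assms
    by (simp add: esym_eq_list_esym del: One_nat_def flip: of_nat_Suc)
qed

lemma esym_1: "finite I \<Longrightarrow> esym 1 \<kappa> I = sum \<kappa> I"
  by (induction I rule: finite_induct) (simp_all add: esym_eq_0 esym_insert esym_0)

lemma esym_Suc_le_max:
  assumes "finite I" and "\<forall>i\<le>j. 0 < esym (int i) \<kappa> I" and "\<forall>x\<in>I. \<kappa> x \<le> M"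
  shows "real (Suc j) * esym (int (Suc j)) \<kappa> I \<le> real (card I - j) * M * esym (int j) \<kappa> I"
proof (cases "I = {}")
  case True
  then show ?thesis
    by (simp add: esym_eq_0)
next
  case False
  then have "0 < real (card I)"
    using assms(1) by (simp add: card_gt_0_iff)
  have "esym 1 \<kappa> I \<le> real (card I) * M"
    using esym_1[OF assms(1)] sum_bounded_above[of I \<kappa> M] assms(3) by simp
  have "real (card I) * (real (Suc j) * esym (int (Suc j)) \<kappa> I)
      = real (Suc j) * real (card I) * esym (int (Suc j)) \<kappa> I"
    by (simp add: mult_ac)
  also have "\<dots> \<le> real (card I - j) * esym 1 \<kappa> I * esym (int j) \<kappa> I"
    by (rule esym_Suc_le[OF assms(1,2)])
  also have "\<dots> \<le> real (card I - j) * (real (card I) * M) * esym (int j) \<kappa> I"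
    using \<open>esym 1 \<kappa> I \<le> real (card I) * M\<close> assms(2)
    by (intro mult_right_mono mult_left_mono) auto
  also have "\<dots> = real (card I) * (real (card I - j) * M * esym (int j) \<kappa> I)"
    by (simp add: mult_ac)
  finally have "real (card I) * (real (Suc j) * esym (int (Suc j)) \<kappa> I)
      \<le> real (card I) * (real (card I - j) * M * esym (int j) \<kappa> I)" .
  with \<open>0 < real (card I)\<close> show ?thesis
    by (simp only: mult_le_cancel_left_pos)
qed

section \<open>The cones Gamma_k\<close>

definition Gamma_on :: "nat \<Rightarrow> (nat \<Rightarrow> real) \<Rightarrow> nat set \<Rightarrow> bool" where
  "Gamma_on k \<kappa> I \<longleftrightarrow> (\<forall>m\<in>{1..k}. 0 < esym (int m) \<kappa> I)"

lemma Gamma_on_esym_pos: "finite I \<Longrightarrow> Gamma_on k \<kappa> I \<Longrightarrow> m \<le> k \<Longrightarrow> 0 < esym (int m) \<kappa> I"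
  by (cases m) (auto simp: Gamma_on_def esym_0 simp del: of_nat_Suc)

lemma Gamma_on_Diff:
  assumes "finite I" and "Gamma_on k \<kappa> I" and "i \<in> I"
  shows "Gamma_on (k - 1) \<kappa> (I - {i})"
proof -
  define J where "J = I - {i}"
  have J: "finite J" "i \<notin> J" "I = insert i J"
    using assms by (auto simp: J_def)
  have rec: "esym (int (Suc m)) \<kappa> I = esym (int (Suc m)) \<kappa> J + \<kappa> i * esym (int m) \<kappa> J" for m
    using esym_insert_Suc[OF J(1,2)] J(3) by simp
  have "0 < esym (int m) \<kappa> J" if "m < k" for m
    using that
  proof (induction m)
    case 0
    then show ?case
      using J(1) by (simp add: esym_0)
  next
    case (Suc m)
    define a u c where "a = esym (int m) \<kappa> J" and "u = esym (int (Suc m)) \<kappa> J"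
      and "c = esym (int (Suc (Suc m))) \<kappa> J"
    have "a > 0"
      using Suc by (simp add: a_def)
    have I1: "0 < u + \<kappa> i * a" and I2: "0 < c + \<kappa> i * u"
      using Gamma_on_esym_pos[OF assms(1,2), of "Suc m"]
        Gamma_on_esym_pos[OF assms(1,2), of "Suc (Suc m)"] Suc.prems rec[of m] rec[of "Suc m"]
      by (simp_all add: a_def u_def c_def del: of_nat_Suc)
    have newton: "a * c \<le> u\<^sup>2"
      using esym_newton[OF J(1), of m \<kappa>] by (simp add: a_def u_def c_def)
    show ?case
    proof (rule ccontr)
      assume "\<not> 0 < esym (int (Suc m)) \<kappa> J"
      then have "u \<le> 0"
        by (simp add: u_def)
      have "u\<^sup>2 \<le> (- u) * (\<kappa> i * a)"
        using mult_left_mono[of "- u" "\<kappa> i * a" "- u"] I1 \<open>u \<le> 0\<close> by (simp add: power2_eq_square)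
      also have "\<dots> = a * (- \<kappa> i * u)"
        by (simp add: algebra_simps)
      also have "\<dots> < a * c"
        using mult_strict_left_mono[of "- \<kappa> i * u" c a] I2 \<open>a > 0\<close> by simp
      finally show False
        using newton by simp
    qed
  qed
  then show ?thesis
    by (auto simp: Gamma_on_def J_def)
qed

lemma Gamma_on_neg_entry_bound:
  assumes "finite I" and "Gamma_on k \<kappa> I" and "1 \<le> k" and "i \<in> I" and "\<kappa> i < 0"
    and "\<forall>j\<in>I. \<kappa> j \<le> M"
  shows "- \<kappa> i * real k < M * (real (card I) - real k)"
proof -
  define J where "J = I - {i}"
  have J: "finite J" "i \<notin> J" "I = insert i J"
    using assms by (auto simp: J_def)
  have pos: "\<forall>j\<le>k - 1. 0 < esym (int j) \<kappa> J"
    using Gamma_on_esym_pos[OF J(1) Gamma_on_Diff[OF assms(1,2,4), folded J_def]] by simp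
  define s where "s = esym (int (k - 1)) \<kappa> J"
  have "s > 0"
    using pos by (simp add: s_def)
  have "0 < esym (int k) \<kappa> I"
    using Gamma_on_esym_pos[OF assms(1,2)] by simp
  then have "k \<le> card I"
    using esym_eq_0[OF assms(1), of "int k" \<kappa>] by force
  have "0 < esym (int k) \<kappa> J + \<kappa> i * s"
    using \<open>0 < esym (int k) \<kappa> I\<close> esym_insert_Suc[OF J(1,2), of "k - 1" \<kappa>] J(3) assms(3)
    by (simp add: s_def)
  then have "(- \<kappa> i * real k) * s < real k * esym (int k) \<kappa> J"
    using mult_strict_left_mono[of "- \<kappa> i * s" "esym (int k) \<kappa> J" "real k"] assms(3)
    by (simp add: mult_ac)
  also have "\<dots> \<le> real (card J - (k - 1)) * M * s"
    using esym_Suc_le_max[OF J(1) pos, of M] assms(3,6) by (simp add: J_def s_def)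
  also have "\<dots> = (M * (real (card I) - real k)) * s"
    using \<open>k \<le> card I\<close> assms(1,3,4) by (simp add: J_def of_nat_diff)
  finally show ?thesis
    using \<open>s > 0\<close> by (simp only: mult_less_cancel_right_pos)
qed

lemma expdq_pos: "0 < expdq a b"
proof (cases a b rule: linorder_cases)
  case less
  then show ?thesis
    by (simp add: expdq_def divide_neg_neg)
next
  case greater
  then show ?thesis
    by (simp add: expdq_def)
qed (simp add: expdq_def)

lemma exp_le_expdq_mult: "exp a \<le> expdq a b * (1 + max 0 (a - b))"
proof (cases a b rule: linorder_cases)
  case less
  have "exp a * (1 + (b - a)) \<le> exp b"
    using mult_left_mono[OF exp_ge_add_one_self[of "b - a"], of "exp a"] by (simp add: exp_diff)
  then have "exp a * (b - a) \<le> exp b - exp a"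
    by (simp add: algebra_simps)
  then have "exp a \<le> (exp b - exp a) / (b - a)"
    using less by (simp add: pos_le_divide_eq)
  also have "\<dots> = expdq a b"
    using less unfolding expdq_def by (metis less_irrefl minus_diff_eq minus_divide_divide)
  finally show ?thesis
    using less by simp
next
  case greater
  have "exp b * (1 + (a - b)) \<le> exp a"
    using mult_left_mono[OF exp_ge_add_one_self[of "a - b"], of "exp b"] by (simp add: exp_diff)
  then have "exp a * (a - b) \<le> (exp a - exp b) * (1 + (a - b))"
    by (simp add: algebra_simps)
  then have "exp a \<le> (exp a - exp b) / (a - b) * (1 + (a - b))"
    using greater by (simp add: pos_le_divide_eq)
  then show ?thesis
    using greater by (simp add: expdq_def)
qed (simp add: expdq_def)

lemma expdq_combination_lower_bound:
  assumes "0 < K" and "0 \<le> A" and "0 \<le> s" and "1 + max 0 (a - b) \<le> c * K"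
  shows "exp a / K * (s + (a - b) * A) \<le> c * exp a * A + c * expdq a b * s"
proof -
  have "(a - b) * A \<le> (c * K) * A"
    using assms(2,4) by (intro mult_right_mono) auto
  then have "exp a / K * ((a - b) * A) \<le> exp a / K * ((c * K) * A)"
    by (rule mult_left_mono) (use assms(1) in simp)
  also have "\<dots> = c * exp a * A"
    using assms(1) by simp
  finally have part1: "exp a / K * ((a - b) * A) \<le> c * exp a * A" .
  have "expdq a b * (1 + max 0 (a - b)) \<le> expdq a b * (c * K)"
    using assms(4) expdq_pos[of a b] by (intro mult_left_mono) auto
  then have "exp a \<le> expdq a b * (c * K)"
    using exp_le_expdq_mult[of a b] by linarith
  then have "exp a / K \<le> c * expdq a b"
    using assms(1) by (simp add: pos_divide_le_eq mult_ac)
  then have part2: "exp a / K * s \<le> c * expdq a b * s"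
    using assms(3) by (rule mult_right_mono)
  show ?thesis
    using part1 part2 by (simp add: distrib_left)
qed

lemma Gamma_on_entry_gap:
  assumes "finite I" and "Gamma_on k \<kappa> I" and "card I < 2 * k"
    and "i \<in> I" and "l \<in> I" and "\<forall>j\<in>I. \<kappa> j \<le> K" and "2 * real k \<le> K"
  shows "1 + max 0 (\<kappa> l - \<kappa> i) \<le> (2 - 1 / (3 * real k)) * K"
proof -
  have "k \<ge> 1"
    using assms(3) by simp
  then have "K / real k \<le> K"
    using assms(7) by (simp add: divide_le_eq)
  have "- \<kappa> i \<le> K - K / real k"
  proof (cases "\<kappa> i < 0")
    case True
    have "- \<kappa> i * real k < K * (real (card I) - real k)"
      using assms(1,2,4,6) \<open>k \<ge> 1\<close> True by (intro Gamma_on_neg_entry_bound) simp_all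
    also have "\<dots> \<le> K * (real k - 1)"
      using assms(3,7) by (intro mult_left_mono) simp_all
    finally show ?thesis
      using \<open>k \<ge> 1\<close> by (simp add: field_simps)
  qed (use \<open>K / real k \<le> K\<close> in linarith)
  moreover have "(2 - 1 / (3 * real k)) * K = 2 * K - K / real k + 2 * K / (3 * real k)"
    using \<open>k \<ge> 1\<close> by (simp add: field_simps)
  moreover have "4 / 3 \<le> 2 * K / (3 * real k)"
    using assms(7) \<open>k \<ge> 1\<close> by (simp add: field_simps)
  moreover have "\<kappa> l \<le> K"
    using assms(5,6) by simp
  ultimately show ?thesis
    using \<open>K / real k \<le> K\<close> by linarith
qed

lemma Gamma_on_exp_inequality:
  assumes "finite I" and "Gamma_on k \<kappa> I" and "card I < 2 * k"
    and "i \<in> I" and "l \<in> I" and "i \<noteq> l" and "\<forall>j\<in>I. \<kappa> j \<le> K" and "2 * real k \<le> K"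
  shows "exp (\<kappa> l) / K * esym (int k - 1) \<kappa> (I - {i})
    \<le> (2 - 1 / (3 * real k)) * exp (\<kappa> l) * esym (int k - 2) \<kappa> (I - {i, l})
      + (2 - 1 / (3 * real k)) * expdq (\<kappa> l) (\<kappa> i) * esym (int k - 1) \<kappa> (I - {l})"
proof -
  define J where "J = I - {i, l}"
  have J: "finite J" "i \<notin> J" "l \<notin> J" "I - {l} = insert i J" "I - {i} = insert l J"
    "J = I - {l} - {i}" "i \<in> I - {l}"
    using assms(1,4,5,6) by (auto simp: J_def)
  have "card {i, l} \<le> card I"
    using assms(1,4,5) by (intro card_mono) auto
  then have "k \<ge> 2"
    using assms(3,6) by simp
  then have shift: "int k - 1 = int (k - 1)" "int k - 2 = int (k - 2)"
    by auto
  have Gamma_l: "Gamma_on (k - 1) \<kappa> (I - {l})"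
    using Gamma_on_Diff[OF assms(1,2,5)] .
  have "Gamma_on (k - 2) \<kappa> J"
    using Gamma_on_Diff[OF _ Gamma_l J(7)] J(6) assms(1) by (simp add: numeral_2_eq_2)
  then have "0 < esym (int k - 2) \<kappa> J"
    unfolding shift by (rule Gamma_on_esym_pos[OF J(1) _ order_refl])
  moreover have "0 < esym (int k - 1) \<kappa> (I - {l})"
    unfolding shift using Gamma_on_esym_pos[OF _ Gamma_l order_refl] assms(1) by simp
  moreover have "esym (int k - 1) \<kappa> (I - {i})
      = esym (int k - 1) \<kappa> (I - {l}) + (\<kappa> l - \<kappa> i) * esym (int k - 2) \<kappa> J"
    using esym_insert[OF J(1,2), of "int k - 1" \<kappa>] esym_insert[OF J(1,3), of "int k - 1" \<kappa>] J(4,5)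
    by (simp add: algebra_simps)
  moreover have "1 + max 0 (\<kappa> l - \<kappa> i) \<le> (2 - 1 / (3 * real k)) * K"
    using Gamma_on_entry_gap[OF assms(1-5,7,8)] .
  ultimately show ?thesis
    using expdq_combination_lower_bound[of K "esym (int k - 2) \<kappa> J" "esym (int k - 1) \<kappa> (I - {l})"]
      assms(8) \<open>k \<ge> 2\<close> by (simp add: J_def)
qed

theorem lemma3p1:
  fixes n k :: nat
  assumes "1 \<le> k" and "k \<le> n" and "n < 2 * k"
  shows "\<exists>M0::real. \<forall>\<kappa>::nat \<Rightarrow> real. \<forall>i l.
     Gamma n k \<kappa> \<longrightarrow> (\<forall>j\<in>{1..n}. \<kappa> j \<le> \<kappa> 1) \<longrightarrow> \<kappa> 1 \<ge> M0 \<longrightarrow>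
     i \<in> {1..n} \<longrightarrow> l \<in> {1..n} \<longrightarrow> i \<noteq> l \<longrightarrow>
     (2 - 1 / (3 * real k)) * exp (\<kappa> l) * esym (int k - 2) \<kappa> ({1..n} - {i, l})
     + (2 - 1 / (3 * real k)) * expdq (\<kappa> l) (\<kappa> i) * esym (int k - 1) \<kappa> ({1..n} - {l})
     \<ge> exp (\<kappa> l) / \<kappa> 1 * esym (int k - 1) \<kappa> ({1..n} - {i})"
proof (intro exI[of _ "2 * real k"] allI impI)
  fix \<kappa> :: "nat \<Rightarrow> real" and i l :: nat
  assume "Gamma n k \<kappa>" "\<forall>j\<in>{1..n}. \<kappa> j \<le> \<kappa> 1" "2 * real k \<le> \<kappa> 1"
    and "i \<in> {1..n}" "l \<in> {1..n}" "i \<noteq> l"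
  moreover have "Gamma_on k \<kappa> {1..n}"
    using \<open>Gamma n k \<kappa>\<close> by (simp add: Gamma_def Gamma_on_def)
  ultimately show "(2 - 1 / (3 * real k)) * exp (\<kappa> l) * esym (int k - 2) \<kappa> ({1..n} - {i, l})
     + (2 - 1 / (3 * real k)) * expdq (\<kappa> l) (\<kappa> i) * esym (int k - 1) \<kappa> ({1..n} - {l})
     \<ge> exp (\<kappa> l) / \<kappa> 1 * esym (int k - 1) \<kappa> ({1..n} - {i})"
    using Gamma_on_exp_inequality[of "{1..n}" k \<kappa> i l "\<kappa> 1"] assms(3) by simp
qed

end
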